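(* Let $Z$ be a random variable and $M\ge0$ a random variable, and let $C,D$ be constants such that for every $\kappa>0$ and $\delta\in(0,1)$, $\Pr\big[Z\ge C(\kappa+M)\sqrt{\log(1/\delta)+D+\log(1+M/\kappa)}\big]\le\delta$. Then for any $\beta,\kappa>0$ and $\delta\in(0,1)$, \[ \Pr\Big[Z\ge C((1+\beta)M+\kappa)\sqrt{\log\tfrac2\delta+2\,\mathrm{lil}\big(\tfrac{\beta M}{\kappa}\big)+D+\log\big(1+\tfrac e\beta\big)}\Big]\le\delta. \] In particular, if $D\gtrsim1$, then taking $\beta=1$, $\Pr\big[Z\gtrsim C(M+\kappa)\sqrt{\log\frac1\delta+\mathrm{lil}(\frac M\kappa)+D}\big]\le\delta$.
   Context: $\log_+x:=\max\{1,\log x\}$, $\mathrm{lil}(x):=\log_+(\log_+x)$. $\lesssim,\gtrsim$ hide universal constants. *)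

theory Defs
  imports "HOL-Probability.Probability"
begin

definition log_plus :: "real \<Rightarrow> real" where
  "log_plus x = max 1 (ln x)"

definition lil :: "real \<Rightarrow> real" where
  "lil x = log_plus (log_plus x)"

end

(* Peeling: apply the hypothesis on the shells kappa_k = kappa e^k with confidence
   delta_k = 2 delta / ((k+2)(k+3)), which sum to delta, and take a union bound.  For an outcome
   with r = beta M / kappa, the shell k = nat ceil (ln r - 1) has kappa e^k <= kappa + beta M and
   M / kappa_k <= e / beta, while ln (1 / delta_k) <= ln (2 / delta) + 2 lil r because k <= exp (lil r);
   so its threshold lies below the claimed one.  The hypothesis is unsatisfiable when C < 0, or
   when C > 0 and D < 0, since then the thresholds tend to -infinity on {M <= n} for a fixed delta. *)
theory Submission
  imports Defs "HOL-Real_Asymp.Real_Asymp"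
begin

lemma lil_ge_one: "1 \<le> lil x"
  unfolding lil_def log_plus_def by simp

lemma log_plus_le_exp_lil: "log_plus x \<le> exp (lil x)"
proof -
  have "log_plus x = exp (ln (log_plus x))"
    unfolding log_plus_def by simp
  also have "\<dots> \<le> exp (lil x)"
    unfolding lil_def log_plus_def[of "log_plus x"] by simp
  finally show ?thesis .
qed

lemma peeling_weights_sums: "(\<lambda>k::nat. 2 * \<delta> / ((real k + 2) * (real k + 3))) sums (\<delta>::real)"
proof -
  define f where "f k = 2 * \<delta> / (real k + 2)" for k :: nat
  have "f \<longlonglongrightarrow> 0"
    unfolding f_def by real_asymp
  then have "(\<lambda>k. f k - f (Suc k)) sums (f 0 - 0)"
    by (rule telescope_sums')
  moreover have "f k - f (Suc k) = 2 * \<delta> / ((real k + 2) * (real k + 3))" for k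
    unfolding f_def by (simp add: field_simps)
  ultimately show ?thesis
    unfolding f_def by simp
qed

lemma peeling_weight_less_one:
  fixes \<delta> :: real
  assumes "\<delta> < 1"
  shows "2 * \<delta> / ((real k + 2) * (real k + 3)) < 1"
proof -
  have "2 * \<delta> < (real k + 2) * (real k + 3)"
    using assms mult_mono[of 2 "real k + 2" 1 "real k + 3"] by linarith
  then show ?thesis
    by (simp add: divide_less_eq)
qed

lemma exp_peel_index_le:
  assumes "0 \<le> r"
  shows "exp (real (nat \<lceil>ln r - 1\<rceil>)) \<le> max 1 r"
proof (cases "nat \<lceil>ln r - 1\<rceil> = 0")
  case False
  then have "real (nat \<lceil>ln r - 1\<rceil>) < ln r"
    by linarith
  moreover have "r > 0"
    using False assms by (cases "r = 0") auto
  ultimately show ?thesis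
    by (smt (verit) exp_less_cancel_iff exp_ln)
qed simp

lemma le_exp_peel_index:
  assumes "0 \<le> r"
  shows "r \<le> exp (real (nat \<lceil>ln r - 1\<rceil>) + 1)"
proof (cases "r = 0")
  case False
  have "ln r \<le> real (nat \<lceil>ln r - 1\<rceil>) + 1"
    by linarith
  with False assms show ?thesis
    by (metis exp_le_cancel_iff exp_ln order_le_less)
qed simp

lemma peel_index_le_exp_lil:
  assumes "0 \<le> r"
  shows "real (nat \<lceil>ln r - 1\<rceil>) \<le> exp (lil r)"
proof -
  have "real (nat \<lceil>ln r - 1\<rceil>) \<le> ln (max 1 r)"
    using exp_peel_index_le[OF assms] by (simp add: ln_ge_iff)
  also have "\<dots> \<le> log_plus r"
    unfolding log_plus_def by (simp add: max_def)
  also have "\<dots> \<le> exp (lil r)"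
    by (rule log_plus_le_exp_lil)
  finally show ?thesis .
qed

lemma ln_inverse_peeling_weight_le:
  fixes \<delta> L :: real
  assumes "0 < \<delta>" and "real k \<le> L" and "5 / 2 \<le> L"
  shows "ln (1 / (2 * \<delta> / ((real k + 2) * (real k + 3)))) \<le> ln (2 / \<delta>) + 2 * ln L"
proof -
  \<comment> \<open>\<open>3 L\<^sup>2 - 5 L - 6 = (L - 5/2) (3 L + 5/2) + 1/4\<close>\<close>
  have "(real k + 2) * (real k + 3) \<le> (L + 2) * (L + 3)"
    using assms(2) by (intro mult_mono) auto
  also have "\<dots> \<le> 4 * L\<^sup>2"
    using mult_nonneg_nonneg[of "L - 5/2" "3 * L + 5/2"] assms(3)
    by (simp add: power2_eq_square algebra_simps)
  finally have "2 / \<delta> * ((real k + 2) * (real k + 3) / 4) \<le> 2 / \<delta> * L\<^sup>2"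
    using assms(1) by (intro mult_left_mono) auto
  moreover have "1 / (2 * \<delta> / ((real k + 2) * (real k + 3))) = 2 / \<delta> * ((real k + 2) * (real k + 3) / 4)"
    by simp
  ultimately have "1 / (2 * \<delta> / ((real k + 2) * (real k + 3))) \<le> 2 / \<delta> * L\<^sup>2"
    by simp
  then have "ln (1 / (2 * \<delta> / ((real k + 2) * (real k + 3)))) \<le> ln (2 / \<delta> * L\<^sup>2)"
    using assms(1) by (intro ln_mono) (simp_all add: add_pos_pos)
  also have "\<dots> = ln (2 / \<delta>) + 2 * ln L"
    using assms by (subst ln_mult) (simp_all add: ln_realpow)
  finally show ?thesis .
qed

lemma peeled_threshold_le:
  fixes C D \<beta> \<kappa> \<delta> m :: real and k :: nat
  assumes "0 \<le> C" and "0 \<le> D" and "0 < \<beta>" and "0 < \<kappa>" and "0 < \<delta>" and "\<delta> < 1"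
    and "0 \<le> m"
    and exp_k_le: "exp (real k) \<le> max 1 (\<beta> * m / \<kappa>)"
    and le_exp_k: "\<beta> * m / \<kappa> \<le> exp (real k + 1)"
    and k_le: "real k \<le> exp (lil (\<beta> * m / \<kappa>))"
  shows "C * (\<kappa> * exp (real k) + m) *
           sqrt (ln (1 / (2 * \<delta> / ((real k + 2) * (real k + 3)))) + D + ln (1 + m / (\<kappa> * exp (real k))))
       \<le> C * ((1 + \<beta>) * m + \<kappa>) *
           sqrt (ln (2 / \<delta>) + 2 * lil (\<beta> * m / \<kappa>) + D + ln (1 + exp 1 / \<beta>))"
proof (rule mult_mono)
  have "\<kappa> * exp (real k) \<le> \<kappa> * max 1 (\<beta> * m / \<kappa>)"
    using exp_k_le \<open>0 < \<kappa>\<close> by simp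
  also have "\<dots> \<le> \<kappa> + \<beta> * m"
    using assms(3,4,7) by (simp add: max_def)
  finally show "C * (\<kappa> * exp (real k) + m) \<le> C * ((1 + \<beta>) * m + \<kappa>)"
    using \<open>0 \<le> C\<close> by (intro mult_left_mono) (simp_all add: algebra_simps)
  show "0 \<le> C * ((1 + \<beta>) * m + \<kappa>)"
    using assms(1,3,4,7) by simp
next
  have "m / (\<kappa> * exp (real k)) = \<beta> * m / \<kappa> / (\<beta> * exp (real k))"
    using assms(3,4) by (simp add: field_simps)
  also have "\<dots> \<le> exp (real k + 1) / (\<beta> * exp (real k))"
    using le_exp_k assms(3) by (intro divide_right_mono) auto
  also have "\<dots> = exp 1 / \<beta>"
    using assms(3) by (simp add: exp_add)
  finally have ln_ratio: "ln (1 + m / (\<kappa> * exp (real k))) \<le> ln (1 + exp 1 / \<beta>)"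
    using assms(4,7) by (intro ln_mono) (auto intro: add_pos_nonneg)
  have "5 / 2 \<le> exp (1::real)"
    using exp_lower_Taylor_quadratic[of 1] by simp
  also have "\<dots> \<le> exp (lil (\<beta> * m / \<kappa>))"
    using lil_ge_one by simp
  finally have "ln (1 / (2 * \<delta> / ((real k + 2) * (real k + 3)))) \<le> ln (2 / \<delta>) + 2 * lil (\<beta> * m / \<kappa>)"
    using ln_inverse_peeling_weight_le[OF \<open>0 < \<delta>\<close> k_le] by simp
  with ln_ratio show "sqrt (ln (1 / (2 * \<delta> / ((real k + 2) * (real k + 3)))) + D + ln (1 + m / (\<kappa> * exp (real k))))
      \<le> sqrt (ln (2 / \<delta>) + 2 * lil (\<beta> * m / \<kappa>) + D + ln (1 + exp 1 / \<beta>))"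
    by simp
  have "0 \<le> ln (1 / (2 * \<delta> / ((real k + 2) * (real k + 3))))"
    using peeling_weight_less_one[OF \<open>\<delta> < 1\<close>, of k] \<open>0 < \<delta>\<close> by (simp add: ln_div)
  moreover have "0 \<le> ln (1 + m / (\<kappa> * exp (real k)))"
    using assms(4,7) by simp
  ultimately show "0 \<le> sqrt (ln (1 / (2 * \<delta> / ((real k + 2) * (real k + 3)))) + D + ln (1 + m / (\<kappa> * exp (real k))))"
    using \<open>0 \<le> D\<close> by simp
qed

lemma (in prob_space) prob_bounded_tendsto_one:
  assumes "X \<in> borel_measurable M" and "Y \<in> borel_measurable M"
  shows "(\<lambda>n::nat. prob {\<omega> \<in> space M. - real n \<le> X \<omega> \<and> Y \<omega> \<le> real n}) \<longlonglongrightarrow> 1"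
proof -
  define A where "A n = {\<omega> \<in> space M. - real n \<le> X \<omega> \<and> Y \<omega> \<le> real n}" for n :: nat
  have "range A \<subseteq> sets M"
    unfolding A_def using assms by auto
  moreover have "incseq A"
    unfolding A_def incseq_def by force
  moreover have "(\<Union>n. A n) = space M"
  proof (intro equalityI subsetI)
    fix \<omega> assume "\<omega> \<in> space M"
    moreover obtain n :: nat where "max \<bar>X \<omega>\<bar> \<bar>Y \<omega>\<bar> < real n"
      using reals_Archimedean2 by blast
    ultimately have "\<omega> \<in> A n"
      unfolding A_def by auto
    then show "\<omega> \<in> (\<Union>n. A n)" by blast
  qed (auto simp: A_def)
  ultimately show ?thesis
    using finite_Lim_measure_incseq[of A] prob_space unfolding A_def by simp
qed

lemma (in finite_measure) measure_le_of_countable_cover: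
  assumes "A \<subseteq> (\<Union>k. E k)" and "range E \<subseteq> sets M"
    and "\<And>k. measure M (E k) \<le> w k" and "w sums s"
  shows "measure M A \<le> s"
proof -
  have summable: "summable (\<lambda>k. measure M (E k))"
    using assms(3,4) by (intro summable_comparison_test'[OF sums_summable[OF assms(4)], of 0]) auto
  have "measure M A \<le> measure M (\<Union>k. E k)"
    using assms(1,2) by (intro finite_measure_mono) auto
  also have "\<dots> \<le> (\<Sum>k. measure M (E k))"
    using assms(2) summable by (rule finite_measure_subadditive_countably)
  also have "\<dots> \<le> (\<Sum>k. w k)"
    using assms(3,4) summable by (intro suminf_le) (auto simp: sums_iff)
  also have "\<dots> = s"
    using assms(4) by (simp add: sums_iff)
  finally show ?thesis .
qed

locale tail_bound = prob_space P for P :: "'a measure" +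
  fixes Z M :: "'a \<Rightarrow> real" and C D :: real
  assumes Z_measurable [measurable]: "Z \<in> borel_measurable P"
    and M_measurable [measurable]: "M \<in> borel_measurable P"
    and M_nonneg: "\<And>\<omega>. \<omega> \<in> space P \<Longrightarrow> 0 \<le> M \<omega>"
    and tail: "\<And>\<kappa> \<delta>. \<kappa> > 0 \<Longrightarrow> 0 < \<delta> \<Longrightarrow> \<delta> < 1 \<Longrightarrow>
      measure P {\<omega> \<in> space P. Z \<omega> \<ge> C * (\<kappa> + M \<omega>) *
         sqrt (ln (1 / \<delta>) + D + ln (1 + M \<omega> / \<kappa>))} \<le> \<delta>"
begin

definition tail_event :: "real \<Rightarrow> real \<Rightarrow> 'a set" where
  "tail_event \<kappa> \<delta> = {\<omega> \<in> space P. Z \<omega> \<ge> C * (\<kappa> + M \<omega>) *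
     sqrt (ln (1 / \<delta>) + D + ln (1 + M \<omega> / \<kappa>))}"

lemma sets_tail_event [measurable]: "tail_event \<kappa> \<delta> \<in> sets P"
  unfolding tail_event_def by measurable

lemma measure_tail_event: "\<kappa> > 0 \<Longrightarrow> 0 < \<delta> \<Longrightarrow> \<delta> < 1 \<Longrightarrow> measure P (tail_event \<kappa> \<delta>) \<le> \<delta>"
  unfolding tail_event_def by (rule tail)

lemma thresholds_not_unbounded_below:
  assumes "0 < \<delta>\<^sub>0" and "\<delta>\<^sub>0 < 1"
    and "\<And>n::nat. \<exists>\<kappa>>0. \<forall>m. 0 \<le> m \<longrightarrow> m \<le> real n \<longrightarrow>
           C * (\<kappa> + m) * sqrt (ln (1 / \<delta>\<^sub>0) + D + ln (1 + m / \<kappa>)) \<le> - real n"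
  shows False
proof -
  have "prob {\<omega> \<in> space P. - real n \<le> Z \<omega> \<and> M \<omega> \<le> real n} \<le> \<delta>\<^sub>0" for n
  proof -
    obtain \<kappa> where "\<kappa> > 0" and threshold: "\<And>m. 0 \<le> m \<Longrightarrow> m \<le> real n \<Longrightarrow>
        C * (\<kappa> + m) * sqrt (ln (1 / \<delta>\<^sub>0) + D + ln (1 + m / \<kappa>)) \<le> - real n"
      using assms(3)[of n] by blast
    have "{\<omega> \<in> space P. - real n \<le> Z \<omega> \<and> M \<omega> \<le> real n} \<subseteq> tail_event \<kappa> \<delta>\<^sub>0"
      unfolding tail_event_def
    proof safe
      fix \<omega> assume "\<omega> \<in> space P" "- real n \<le> Z \<omega>" "M \<omega> \<le> real n"
      then show "C * (\<kappa> + M \<omega>) * sqrt (ln (1 / \<delta>\<^sub>0) + D + ln (1 + M \<omega> / \<kappa>)) \<le> Z \<omega>"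
        using threshold[of "M \<omega>"] M_nonneg by fastforce
    qed
    then have "prob {\<omega> \<in> space P. - real n \<le> Z \<omega> \<and> M \<omega> \<le> real n} \<le> prob (tail_event \<kappa> \<delta>\<^sub>0)"
      by (intro finite_measure_mono) auto
    also have "\<dots> \<le> \<delta>\<^sub>0"
      using \<open>\<kappa> > 0\<close> assms(1,2) by (rule measure_tail_event)
    finally show ?thesis .
  qed
  then have "1 \<le> \<delta>\<^sub>0"
    using prob_bounded_tendsto_one[OF Z_measurable M_measurable] by (intro LIMSEQ_le_const2) auto
  with assms(2) show False
    by simp
qed

lemma coeff_nonneg: "0 \<le> C"
proof (rule ccontr)
  assume "\<not> 0 \<le> C"
  define \<delta>\<^sub>0 where "\<delta>\<^sub>0 = exp (- \<bar>D\<bar> - 1)"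
  show False
  proof (rule thresholds_not_unbounded_below)
    show "0 < \<delta>\<^sub>0" and "\<delta>\<^sub>0 < 1"
      unfolding \<delta>\<^sub>0_def by simp_all
    fix n :: nat
    define \<kappa> where "\<kappa> = real n / (- C) + 1"
    have "\<kappa> > 0"
      unfolding \<kappa>_def using \<open>\<not> 0 \<le> C\<close> by (simp add: add_nonneg_pos)
    moreover have "C * (\<kappa> + m) * sqrt (ln (1 / \<delta>\<^sub>0) + D + ln (1 + m / \<kappa>)) \<le> - real n"
      if "0 \<le> m" for m
    proof -
      have "0 \<le> ln (1 + m / \<kappa>)"
        using \<open>\<kappa> > 0\<close> \<open>0 \<le> m\<close> by simp
      then have "1 \<le> ln (1 / \<delta>\<^sub>0) + D + ln (1 + m / \<kappa>)"
        unfolding \<delta>\<^sub>0_def by (simp add: ln_div)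
      then have "\<kappa> \<le> (\<kappa> + m) * sqrt (ln (1 / \<delta>\<^sub>0) + D + ln (1 + m / \<kappa>))"
        using \<open>\<kappa> > 0\<close> \<open>0 \<le> m\<close> mult_mono[of \<kappa> "\<kappa> + m" 1] by simp
      then have "C * (\<kappa> + m) * sqrt (ln (1 / \<delta>\<^sub>0) + D + ln (1 + m / \<kappa>)) \<le> C * \<kappa>"
        using \<open>\<not> 0 \<le> C\<close> by (simp add: mult.assoc mult_left_mono_neg)
      also have "C * \<kappa> = - real n + C"
        unfolding \<kappa>_def using \<open>\<not> 0 \<le> C\<close> by (simp add: field_simps)
      finally show ?thesis
        using \<open>\<not> 0 \<le> C\<close> by simp
    qed
    ultimately show "\<exists>\<kappa>>0. \<forall>m. 0 \<le> m \<longrightarrow> m \<le> real n \<longrightarrow>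
        C * (\<kappa> + m) * sqrt (ln (1 / \<delta>\<^sub>0) + D + ln (1 + m / \<kappa>)) \<le> - real n"
      by blast
  qed
qed

lemma offset_nonneg:
  assumes "0 < C"
  shows "0 \<le> D"
proof (rule ccontr)
  assume "\<not> 0 \<le> D"
  define \<delta>\<^sub>0 where "\<delta>\<^sub>0 = exp (D / 2)"
  define s where "s = sqrt (- D / 4)"
  have "0 < s"
    unfolding s_def using \<open>\<not> 0 \<le> D\<close> by simp
  show False
  proof (rule thresholds_not_unbounded_below)
    show "0 < \<delta>\<^sub>0" and "\<delta>\<^sub>0 < 1"
      unfolding \<delta>\<^sub>0_def using \<open>\<not> 0 \<le> D\<close> by simp_all
    fix n :: nat
    define \<kappa> where "\<kappa> = 4 * real n / (- D) + real n / (C * s) + 1"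
    have "0 \<le> 4 * real n / (- D)" and "0 \<le> real n / (C * s)"
      using \<open>\<not> 0 \<le> D\<close> \<open>0 < C\<close> \<open>0 < s\<close> by (intro divide_nonneg_pos; simp)+
    then have large1: "4 * real n / (- D) \<le> \<kappa>" and large2: "real n / (C * s) \<le> \<kappa>" and "\<kappa> > 0"
      unfolding \<kappa>_def by linarith+
    moreover have "C * (\<kappa> + m) * sqrt (ln (1 / \<delta>\<^sub>0) + D + ln (1 + m / \<kappa>)) \<le> - real n"
      if "0 \<le> m" and "m \<le> real n" for m
    proof -
      have "ln (1 + m / \<kappa>) \<le> real n / \<kappa>"
        using ln_add_one_self_le_self[of "m / \<kappa>"] that \<open>\<kappa> > 0\<close> divide_right_mono[of m "real n" \<kappa>]
        by simp
      also have "\<dots> \<le> - D / 4"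
        using large1 \<open>\<kappa> > 0\<close> \<open>\<not> 0 \<le> D\<close> by (simp add: field_simps)
      finally have "sqrt (ln (1 / \<delta>\<^sub>0) + D + ln (1 + m / \<kappa>)) \<le> sqrt (D / 4)"
        unfolding \<delta>\<^sub>0_def by (simp add: ln_div)
      also have "\<dots> = - s"
        unfolding s_def by (simp add: real_sqrt_minus)
      finally have "C * (\<kappa> + m) * sqrt (ln (1 / \<delta>\<^sub>0) + D + ln (1 + m / \<kappa>)) \<le> C * (\<kappa> + m) * (- s)"
        using \<open>0 < C\<close> \<open>\<kappa> > 0\<close> \<open>0 \<le> m\<close> by (intro mult_left_mono) auto
      also have "\<dots> \<le> - (C * s * \<kappa>)"
        using \<open>0 < C\<close> \<open>0 < s\<close> \<open>0 \<le> m\<close> by (simp add: algebra_simps)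
      also have "\<dots> \<le> - real n"
        using large2 \<open>0 < C\<close> \<open>0 < s\<close> by (simp add: field_simps)
      finally show ?thesis .
    qed
    ultimately show "\<exists>\<kappa>>0. \<forall>m. 0 \<le> m \<longrightarrow> m \<le> real n \<longrightarrow>
        C * (\<kappa> + m) * sqrt (ln (1 / \<delta>\<^sub>0) + D + ln (1 + m / \<kappa>)) \<le> - real n"
      by blast
  qed
qed

theorem peeling_tail_bound:
  assumes "0 < \<beta>" and "0 < \<kappa>" and "0 < \<delta>" and "\<delta> < 1"
  shows "measure P {\<omega> \<in> space P. Z \<omega> \<ge> C * ((1 + \<beta>) * M \<omega> + \<kappa>) *
           sqrt (ln (2 / \<delta>) + 2 * lil (\<beta> * M \<omega> / \<kappa>) + D + ln (1 + exp 1 / \<beta>))} \<le> \<delta>"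
proof (cases "C = 0")
  case True
  then show ?thesis
    using measure_tail_event[of 1 \<delta>] assms(3,4) unfolding tail_event_def by simp
next
  case False
  then have "0 < C" and "0 \<le> D"
    using coeff_nonneg offset_nonneg by auto
  define w where "w k = 2 * \<delta> / ((real k + 2) * (real k + 3))" for k :: nat
  show ?thesis
  proof (rule measure_le_of_countable_cover)
    show "range (\<lambda>k. tail_event (\<kappa> * exp (real k)) (w k)) \<subseteq> sets P"
      by auto
    show "measure P (tail_event (\<kappa> * exp (real k)) (w k)) \<le> w k" for k
      using assms(2,3) peeling_weight_less_one[OF assms(4)] unfolding w_def
      by (intro measure_tail_event) auto
    show "w sums \<delta>"
      unfolding w_def by (rule peeling_weights_sums)
    show "{\<omega> \<in> space P. Z \<omega> \<ge> C * ((1 + \<beta>) * M \<omega> + \<kappa>) *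
        sqrt (ln (2 / \<delta>) + 2 * lil (\<beta> * M \<omega> / \<kappa>) + D + ln (1 + exp 1 / \<beta>))}
      \<subseteq> (\<Union>k. tail_event (\<kappa> * exp (real k)) (w k))"
    proof safe
      fix \<omega> assume \<omega>: "\<omega> \<in> space P" and Z_ge: "Z \<omega> \<ge> C * ((1 + \<beta>) * M \<omega> + \<kappa>) *
          sqrt (ln (2 / \<delta>) + 2 * lil (\<beta> * M \<omega> / \<kappa>) + D + ln (1 + exp 1 / \<beta>))"
      define r where "r = \<beta> * M \<omega> / \<kappa>"
      have "0 \<le> r"
        unfolding r_def using M_nonneg[OF \<omega>] assms(1,2) by simp
      have "\<omega> \<in> tail_event (\<kappa> * exp (real (nat \<lceil>ln r - 1\<rceil>))) (w (nat \<lceil>ln r - 1\<rceil>))"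
        using \<omega> order_trans[OF peeled_threshold_le Z_ge] \<open>0 < C\<close> \<open>0 \<le> D\<close> assms M_nonneg[OF \<omega>]
          exp_peel_index_le[OF \<open>0 \<le> r\<close>] le_exp_peel_index[OF \<open>0 \<le> r\<close>] peel_index_le_exp_lil[OF \<open>0 \<le> r\<close>]
        unfolding tail_event_def w_def r_def by simp
      then show "\<omega> \<in> (\<Union>k. tail_event (\<kappa> * exp (real k)) (w k))"
        by blast
    qed
  qed
qed

end

theorem lemma9:
  fixes P :: "'a measure" and Z M :: "'a \<Rightarrow> real" and C D :: real
  assumes "prob_space P"
    and "Z \<in> borel_measurable P" and "M \<in> borel_measurable P"
    and "\<And>\<omega>. \<omega> \<in> space P \<Longrightarrow> M \<omega> \<ge> 0"
    and hyp: "\<And>\<kappa> \<delta>. \<kappa> > 0 \<Longrightarrow> 0 < \<delta> \<Longrightarrow> \<delta> < 1 \<Longrightarrow>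
      measure P {\<omega> \<in> space P. Z \<omega> \<ge> C * (\<kappa> + M \<omega>) *
         sqrt (ln (1 / \<delta>) + D + ln (1 + M \<omega> / \<kappa>))} \<le> \<delta>"
    and "\<beta> > 0" and "\<kappa> > 0" and "0 < \<delta>" and "\<delta> < 1"
  shows "measure P {\<omega> \<in> space P. Z \<omega> \<ge> C * ((1 + \<beta>) * M \<omega> + \<kappa>) *
         sqrt (ln (2 / \<delta>) + 2 * lil (\<beta> * M \<omega> / \<kappa>) + D + ln (1 + exp 1 / \<beta>))} \<le> \<delta>"
proof -
  interpret tail_bound P Z M C D
    using assms(1-5) by (simp add: tail_bound_def tail_bound_axioms_def)
  show ?thesis
    using assms(6-9) by (rule peeling_tail_bound)
qed

end
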